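(* Let $p>2$ be a prime and $g$ a primitive root modulo $p$. Let $a\ge 0$, $r>0$, $N>0$ be integers such that $\mathcal{J}=\{a+r,a+2r,\dots,a+Nr\}\subset[1,p-1]$, and let $$\mathcal{M}(g)=\Big\{\frac{\log_g(a+jr)}{p-1}\colon 1\le j\le N\Big\}\subset[0,1).$$ There exist absolute constants $c_1,c_2>0$ (independent of $p,g,a,r,N,\alpha,\beta$) such that: (i) for any $0\le\alpha\le\beta\le1$ with $\frac1\pi<p(\beta-\alpha)$, $$\big|\mathcal{D}(\mathcal{M}(g);\alpha,\beta)\big|\le c_1\,p^{1/2}\log p\,\big(2+\log(p(\beta-\alpha))\big);$$ (ii) $$\big|\mathcal{D}(\mathcal{M}(g))\big|\le \frac{c_2}{\operatorname{card}(\mathcal{M}(g))}\,p^{1/2}\log^2 p.$$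
   Context: For $x$ coprime to $p$, the discrete logarithm $\log_g x$ is the smallest integer $n\ge 0$ with $g^n\equiv x\pmod p$ (so $0\le \log_g x\le p-2$). For $0\le\alpha\le\beta\le 1$, the discrepancy is $\mathcal{D}(\mathcal{M}(g);\alpha,\beta)=\operatorname{card}(\mathcal{M}(g)\cap[\alpha,\beta])-(\beta-\alpha)\operatorname{card}(\mathcal{M}(g))$, and the extreme discrepancy is $\mathcal{D}(\mathcal{M}(g))=\frac{1}{\operatorname{card}(\mathcal{M}(g))}\sup_{0\le\alpha\le\beta\le1}|\mathcal{D}(\mathcal{M}(g);\alpha,\beta)|$. $\log$ without subscript denotes the natural logarithm. *)

theory Defs
  imports "HOL-Analysis.Analysis" "HOL-Number_Theory.Number_Theory"
begin

definition dlog :: "nat \<Rightarrow> nat \<Rightarrow> nat \<Rightarrow> nat" where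
  "dlog p g x = (LEAST n::nat. [g ^ n = x] (mod p))"

definition Mset :: "nat \<Rightarrow> nat \<Rightarrow> nat \<Rightarrow> nat \<Rightarrow> nat \<Rightarrow> real set" where
  "Mset p g a r N = (\<lambda>j. real (dlog p g (a + j * r)) / real (p - 1)) ` {1..N}"

definition disc :: "real set \<Rightarrow> real \<Rightarrow> real \<Rightarrow> real" where
  "disc M \<alpha> \<beta> = real (card (M \<inter> {\<alpha>..\<beta>})) - (\<beta> - \<alpha>) * real (card M)"

definition ext_disc :: "real set \<Rightarrow> real" where
  "ext_disc M = (1 / real (card M)) *
     (SUP ab \<in> {(\<alpha>, \<beta>). 0 \<le> \<alpha> \<and> \<alpha> \<le> \<beta> \<and> \<beta> \<le> 1}. \<bar>disc M (fst ab) (snd ab)\<bar>)"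

end

theory Submission
  imports Defs "HOL-Library.Real_Mod"
begin

text \<open>
  The discrepancy is controlled, Erd\H{o}s--Tur\'an style, by the sums
  \<open>S(k) = \<Sum>\<^sub>j e((k ind(a + j r)) / (p - 1))\<close> for \<open>0 < k < p - 1\<close>.
  Multiplying \<open>S(k)\<close> by the Gauss sum \<open>\<tau>(k) = \<Sum>\<^sub>w e(-k w / (p - 1)) e(g\<^sup>w / p)\<close>, of modulus
  \<open>\<surd>p\<close>, replaces the character of the index by additive characters of the progression
  itself; these are geometric sums, so \<open>|S(k)| \<le> 4 \<surd>p (1 + log p)\<close> (P\'olya--Vinogradov).
  Summing against the Fourier coefficients of an interval, of size \<open>\<le> 2 / |e(k / (p - 1)) - 1|\<close>,
  gives \<open>|D| = O(\<surd>p log\<^sup>2 p)\<close> for every interval. For intervals of length \<open>L / p\<close> with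
  \<open>L < \<surd>p\<close> the trivial bound \<open>|D| \<le> L + 1\<close> is better, and together they give (i).
\<close>

section \<open>Additive characters\<close>

definition add_char :: "nat \<Rightarrow> int \<Rightarrow> complex" where
  "add_char n x = cis (2 * pi * of_int x / of_nat n)"

lemma add_char_add: "add_char n (x + y) = add_char n x * add_char n y"
  unfolding add_char_def by (simp add: cis_mult add_divide_distrib distrib_left)

lemma add_char_0 [simp]: "add_char n 0 = 1"
  unfolding add_char_def by simp

lemma norm_add_char [simp]: "norm (add_char n x) = 1"
  unfolding add_char_def by simp

lemma add_char_uminus: "add_char n (- x) = cnj (add_char n x)"
  unfolding add_char_def by (simp add: cis_cnj)

lemma cnj_add_char_mult: "cnj (add_char n x) * add_char n y = add_char n (y - x)"
  by (simp add: add_char_uminus [symmetric] add_char_add [symmetric])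

lemma add_char_power: "add_char n x ^ m = add_char n (int m * x)"
  by (induction m) (auto simp: add_char_add algebra_simps)

lemma add_char_eq_1_iff:
  assumes "n > 0"
  shows "add_char n x = 1 \<longleftrightarrow> int n dvd x"
proof -
  have "2 * pi * of_int x / of_nat n = of_int m * (2 * pi) \<longleftrightarrow> x = m * int n" for m
  proof -
    have "2 * pi * of_int x / of_nat n = of_int m * (2 * pi) \<longleftrightarrow> real_of_int x = of_int (m * int n)"
      using assms by (simp add: field_simps)
    then show ?thesis by (simp only: of_int_eq_iff)
  qed
  then show ?thesis
    unfolding add_char_def cis_eq_1_iff by (auto simp: dvd_def mult.commute)
qed

lemma add_char_cong:
  assumes "n > 0" and "[x = y] (mod int n)"
  shows "add_char n x = add_char n y"
proof -
  have "add_char n (x - y) = 1"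
    using assms by (simp add: add_char_eq_1_iff cong_iff_dvd_diff)
  then show ?thesis
    using add_char_add [of n "x - y" y] by simp
qed

lemma add_char_mod:
  assumes "n > 0"
  shows "add_char n (int (x mod n)) = add_char n (int x)"
  using assms by (intro add_char_cong) (auto simp: cong_def zmod_int)

lemma sum_add_char_eq_0:
  assumes "n > 0" and "\<not> int n dvd d"
  shows "(\<Sum>k<n. add_char n (int k * d)) = 0"
proof -
  have ne1: "add_char n d \<noteq> 1"
    using add_char_eq_1_iff [OF assms(1)] assms(2) by simp
  have "(\<Sum>k<n. add_char n (int k * d)) = (\<Sum>k<n. add_char n d ^ k)"
    by (simp add: add_char_power)
  also have "\<dots> = (add_char n d ^ n - 1) / (add_char n d - 1)"
    using ne1 by (rule geometric_sum)
  also have "add_char n d ^ n = 1"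
    using assms(1) by (simp add: add_char_power add_char_eq_1_iff)
  finally show ?thesis by simp
qed

lemma sum_add_char_orthogonal:
  assumes "x < n" and "y < n"
  shows "(\<Sum>k<n. add_char n (int k * (int x - int y))) = (if x = y then of_nat n else 0)"
proof (cases "x = y")
  case False
  have "\<not> int n dvd (int x - int y)"
  proof
    assume "int n dvd (int x - int y)"
    then have "\<bar>int n\<bar> \<le> \<bar>int x - int y\<bar>"
      using False by (intro dvd_imp_le_int) auto
    then show False using assms by linarith
  qed
  with False assms show ?thesis by (simp add: sum_add_char_eq_0)
qed simp

lemma card_filter_add_char_expansion:
  assumes "finite I" and "J \<subseteq> {..<n}" and "\<And>i. i \<in> I \<Longrightarrow> t i < n"
  shows "of_nat (n * card {i\<in>I. t i \<in> J}) =
    (\<Sum>k<n. (\<Sum>m\<in>J. add_char n (- (int k * int m))) * (\<Sum>i\<in>I. add_char n (int k * int (t i))))"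
proof -
  have "of_nat (n * card {i\<in>I. t i \<in> J}) = (\<Sum>i\<in>I. if t i \<in> J then of_nat n else (0::complex))"
    using assms(1) by (simp add: sum.If_cases Int_def)
  also have "\<dots> = (\<Sum>i\<in>I. \<Sum>m\<in>J. if t i = m then of_nat n else 0)"
    using finite_subset [OF assms(2)] by (simp add: sum.delta)
  also have "\<dots> = (\<Sum>i\<in>I. \<Sum>m\<in>J. \<Sum>k<n. add_char n (int k * (int (t i) - int m)))"
    using assms(2,3) by (intro sum.cong refl) (auto simp: sum_add_char_orthogonal)
  also have "\<dots> = (\<Sum>i\<in>I. \<Sum>k<n. \<Sum>m\<in>J. add_char n (- (int k * int m)) * add_char n (int k * int (t i)))"
    by (rule sum.cong [OF refl], subst sum.swap) (simp add: add_char_add [symmetric] algebra_simps)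
  also have "\<dots> = (\<Sum>k<n. (\<Sum>m\<in>J. add_char n (- (int k * int m))) * (\<Sum>i\<in>I. add_char n (int k * int (t i))))"
    by (subst sum.swap) (simp add: sum_distrib_left sum_distrib_right)
  finally show ?thesis .
qed

lemma norm_sum_power_ivl_le:
  fixes z :: complex
  assumes "norm z = 1" and "z \<noteq> 1"
  shows "norm (\<Sum>m\<in>{lo..<hi}. z ^ m) \<le> 2 / norm (z - 1)"
proof (cases hi)
  case (Suc h)
  show ?thesis
  proof (cases "h < lo")
    case False
    have "(\<Sum>m\<in>{lo..<hi}. z ^ m) = (z ^ lo - z ^ Suc h) / (1 - z)"
      using False assms(2) by (simp add: Suc atLeastLessThanSuc_atLeastAtMost sum_gp)
    moreover have "norm (z ^ lo - z ^ Suc h) \<le> 2"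
      using norm_triangle_ineq4 [of "z ^ lo" "z ^ Suc h"] assms(1) by (simp add: norm_power norm_mult)
    ultimately show ?thesis
      using assms by (simp add: norm_divide norm_minus_commute divide_right_mono)
  qed (simp add: Suc)
qed simp

lemma norm_sum_add_char_ivl_le:
  assumes "0 < k" and "k < n"
  shows "norm (\<Sum>m\<in>{lo..<hi}. add_char n (- (int k * int m))) \<le> 2 / norm (add_char n (int k) - 1)"
proof -
  define z where "z = add_char n (- int k)"
  have "z \<noteq> 1"
    using assms by (auto simp: z_def add_char_eq_1_iff dest: zdvd_imp_le)
  then have "norm (\<Sum>m\<in>{lo..<hi}. z ^ m) \<le> 2 / norm (z - 1)"
    by (intro norm_sum_power_ivl_le) (simp add: z_def)
  moreover have "z - 1 = cnj (add_char n (int k) - 1)"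
    by (simp add: z_def add_char_uminus)
  ultimately show ?thesis
    by (simp add: z_def add_char_power mult.commute del: complex_cnj_diff)
qed

lemma sin_ge_half:
  assumes "0 \<le> y" and "y \<le> pi / 2"
  shows "y / 2 \<le> sin y"
proof -
  have "\<bar>sin y - (\<Sum>m<3. sin_coeff m * y ^ m)\<bar> \<le> inverse (fact 3) * \<bar>y\<bar> ^ 3"
    by (rule Maclaurin_sin_bound)
  moreover have "(\<Sum>m<3. sin_coeff m * y ^ m) = y"
    by (simp add: sin_coeff_def eval_nat_numeral)
  ultimately have cubic: "y - y ^ 3 / 6 \<le> sin y"
    using assms by (simp add: eval_nat_numeral abs_if split: if_splits)
  have "pi \<le> 32/10"
    using pi_approx by simp
  then have "y \<le> 16/10"
    using assms by linarith
  then have "y * y \<le> 3"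
    using mult_mono [of y "16/10" y "16/10"] assms by simp
  then have "y ^ 3 / 6 \<le> y / 2"
    using mult_left_mono [of "y * y" 3 y] assms by (simp add: power3_eq_cube)
  with cubic show ?thesis by linarith
qed

lemma ln_pi_le: "ln pi \<le> 16 / 10"
proof -
  have "pi \<le> (178 / 100)\<^sup>2"
    using pi_approx by (simp add: power2_eq_square)
  then have "sqrt pi \<le> 178 / 100"
    using real_sqrt_le_mono by fastforce
  moreover have "ln (sqrt pi) \<le> sqrt pi - 1"
    by (intro ln_le_minus_one) simp
  moreover have "ln (sqrt pi) = ln pi / 2"
    by (simp add: ln_sqrt)
  ultimately show ?thesis
    by linarith
qed

lemma norm_add_char_minus_1: "norm (add_char n x - 1) = 2 * \<bar>sin (pi * of_int x / of_nat n)\<bar>"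
proof -
  define t where "t = pi * of_int x / of_nat n"
  have "add_char n x - 1 = cis t * (cis t - cis (- t))"
    by (simp add: add_char_def t_def algebra_simps cis_mult flip: mult_2)
  moreover have "cis t - cis (- t) = Complex 0 (2 * sin t)"
    by (simp add: complex_eq_iff)
  ultimately have "norm (add_char n x - 1) = norm (Complex 0 (2 * sin t))"
    by (simp only: norm_mult norm_cis mult_1_left)
  also have "\<dots> = sqrt ((2 * sin t)\<^sup>2)"
    by (simp add: cmod_def)
  also have "\<dots> = \<bar>2 * sin t\<bar>"
    by (rule real_sqrt_abs)
  finally show ?thesis
    by (simp add: t_def abs_mult)
qed

text \<open>By the symmetry \<open>c \<mapsto> n - c\<close> it suffices to bound \<open>sin\<close> on \<open>[0, \<pi>/2]\<close>.\<close>
lemma norm_add_char_minus_1_ge: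
  assumes "0 < c" and "c < n"
  shows "real (min c (n - c)) / real n \<le> norm (add_char n (int c) - 1)"
proof -
  define d where "d = min c (n - c)"
  have "sin (pi * real c / real n) = sin (pi * real d / real n)"
  proof (cases "d = c")
    case False
    then have "pi * real d / real n = pi - pi * real c / real n"
      using assms by (simp add: d_def min_def of_nat_diff field_simps split: if_splits)
    then show ?thesis by simp
  qed simp
  moreover have "pi * real d / real n \<le> pi / 2"
    using assms by (simp add: d_def field_simps)
  then have "pi * real d / real n / 2 \<le> sin (pi * real d / real n)"
    by (intro sin_ge_half) auto
  moreover have "real d / real n \<le> pi * real d / real n"
    using pi_gt3 by (intro divide_right_mono) (auto simp: mult_le_cancel_right1)
  ultimately show ?thesis
    unfolding d_def [symmetric] by (simp add: norm_add_char_minus_1)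
qed

lemma sum_inverse_norm_add_char_minus_1_le:
  assumes "n \<ge> 2"
  shows "(\<Sum>c\<in>{1..<n}. 1 / norm (add_char n (int c) - 1)) \<le> 2 * real n * (1 + ln (real n))"
proof -
  have "1 / norm (add_char n (int c) - 1) \<le> real n / real c + real n / real (n - c)"
    if "c \<in> {1..<n}" for c
  proof -
    have "1 / norm (add_char n (int c) - 1) \<le> 1 / (real (min c (n - c)) / real n)"
      using norm_add_char_minus_1_ge [of c n] that by (intro frac_le) auto
    also have "\<dots> = real n / real (min c (n - c))"
      by simp
    also have "\<dots> \<le> real n / real c + real n / real (n - c)"
      by (simp add: min_def)
    finally show ?thesis .
  qed
  then have "(\<Sum>c\<in>{1..<n}. 1 / norm (add_char n (int c) - 1))
      \<le> (\<Sum>c\<in>{1..<n}. real n / real c) + (\<Sum>c\<in>{1..<n}. real n / real (n - c))"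
    unfolding sum.distrib [symmetric] by (rule sum_mono)
  also have "(\<Sum>c\<in>{1..<n}. real n / real (n - c)) = (\<Sum>c\<in>{1..<n}. real n / real c)"
    using sum.atLeastLessThan_rev [of "\<lambda>c. real n / real c" 1 n] by simp
  also have "(\<Sum>c\<in>{1..<n}. real n / real c) = real n * harm (n - 1)"
    using assms by (simp add: harm_def sum_distrib_left divide_inverse atLeastLessThan_nat_numeral
        atLeastLessThanSuc_atLeastAtMost [symmetric])
  also have "\<dots> \<le> real n * (1 + ln (real n))"
    using harm_mono [of "n - 1" n, where 'a = real] euler_mascheroni_sequence_decreasing [of 1 n] assms
    by (intro mult_left_mono) (simp_all add: harm_def)
  finally show ?thesis
    by simp
qed

lemma sum_lessThan_shift_periodic:
  fixes f :: "nat \<Rightarrow> 'a::cancel_comm_monoid_add"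
  assumes "\<And>w. f (w + q) = f w"
  shows "(\<Sum>u<q. f (u + v)) = (\<Sum>u<q. f u)"
proof (induction v)
  case (Suc v)
  have "(\<Sum>u<q. f (u + Suc v)) + f v = (\<Sum>u<Suc q. f (u + v))"
    unfolding sum.lessThan_Suc_shift by (simp add: add.commute)
  also have "\<dots> = (\<Sum>u<q. f (u + v)) + f v"
    using assms [of v] by (simp add: add.commute)
  finally show ?case
    using Suc by (simp add: add_right_cancel)
qed simp

section \<open>Grid points in an interval\<close>

definition grid_ivl :: "nat \<Rightarrow> real \<Rightarrow> real \<Rightarrow> nat set" where
  "grid_ivl n \<alpha> \<beta> = {nat \<lceil>\<alpha> * real n\<rceil>..<min n (nat \<lfloor>\<beta> * real n\<rfloor> + 1)}"

lemma grid_ivl_subset: "grid_ivl n \<alpha> \<beta> \<subseteq> {..<n}"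
  by (auto simp: grid_ivl_def)

lemma mem_grid_ivl_iff:
  assumes "m < n" and "0 \<le> \<alpha>" and "0 \<le> \<beta>"
  shows "m \<in> grid_ivl n \<alpha> \<beta> \<longleftrightarrow> \<alpha> \<le> real m / real n \<and> real m / real n \<le> \<beta>"
proof -
  have n: "real n > 0"
    using assms by simp
  have "\<alpha> \<le> real m / real n \<longleftrightarrow> nat \<lceil>\<alpha> * real n\<rceil> \<le> m"
    using n by (simp add: le_divide_eq ceiling_le_iff nat_le_iff)
  moreover have "real m / real n \<le> \<beta> \<longleftrightarrow> m < nat \<lfloor>\<beta> * real n\<rfloor> + 1"
    using n assms(3) by (simp add: divide_le_eq le_floor_iff less_Suc_eq_le le_nat_iff)
  ultimately show ?thesis
    using assms(1) by (auto simp: grid_ivl_def)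
qed

lemma card_grid_ivl_approx:
  assumes "0 \<le> \<alpha>" and "\<alpha> \<le> \<beta>" and "\<beta> \<le> 1"
  shows "\<bar>real (card (grid_ivl n \<alpha> \<beta>)) - (\<beta> - \<alpha>) * real n\<bar> \<le> 1"
proof -
  define lo where "lo = nat \<lceil>\<alpha> * real n\<rceil>"
  define hi where "hi = min n (nat \<lfloor>\<beta> * real n\<rfloor> + 1)"
  have ab: "\<alpha> * real n \<le> \<beta> * real n" "\<beta> * real n \<le> real n" "0 \<le> \<alpha> * real n"
    using assms by (auto intro: mult_right_mono mult_left_le_one_le)
  then have "\<alpha> * real n \<le> real lo" "real lo < \<alpha> * real n + 1"
    and "\<beta> * real n \<le> real hi" "real hi \<le> \<beta> * real n + 1"
    unfolding lo_def hi_def by linarith+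
  then have "\<bar>real (hi - lo) - (\<beta> * real n - \<alpha> * real n)\<bar> \<le> 1"
    using ab by (cases "lo \<le> hi") (auto simp: of_nat_diff)
  then show ?thesis
    unfolding grid_ivl_def lo_def [symmetric] hi_def [symmetric] by (simp add: left_diff_distrib)
qed

section \<open>Gauss sums for a primitive root\<close>

locale prime_primroot =
  fixes p g :: nat
  assumes prime: "prime p" and p_gt_2: "p > 2" and primroot: "residue_primroot p g"
begin

definition q :: nat where "q = p - 1"

lemma q_ge_2: "q \<ge> 2"
  using p_gt_2 by (simp add: q_def)

lemma q_pos: "q > 0"
  using q_ge_2 by simp

lemma p_pos: "p > 0"
  using p_gt_2 by simp

lemma ln_p_ge_1: "1 \<le> ln (real p)"
proof -
  have "exp 1 \<le> real p"
    using e_less_272 p_gt_2 by linarith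
  then show ?thesis
    using p_pos by (simp add: ln_ge_iff)
qed

lemma bij_betw_power_mod: "bij_betw (\<lambda>i. g ^ i mod p) {..<q} {0<..<p}"
proof -
  have "bij_betw (\<lambda>i. g ^ i mod p) {..<totient p} (totatives p)"
    using p_gt_2 primroot by (intro residue_primroot_is_generator) auto
  then show ?thesis
    using prime by (simp add: totient_prime totatives_prime q_def)
qed

lemma not_dvd_power: "\<not> p dvd g ^ i"
proof
  assume "p dvd g ^ i"
  then have "p dvd g"
    using prime prime_dvd_power by blast
  moreover have "coprime p g"
    using primroot by (simp add: residue_primroot_def)
  ultimately have "p dvd 1"
    by (meson coprime_common_divisor dvd_refl)
  then show False
    using p_gt_2 by simp
qed

lemma power_q_cong: "[g ^ q = 1] (mod p)"
  unfolding q_def using fermat_theorem [OF prime] not_dvd_power [of 1] by simp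

lemma power_cong_imp_eq: "i < q \<Longrightarrow> j < q \<Longrightarrow> [g ^ i = g ^ j] (mod p) \<Longrightarrow> i = j"
  using bij_betw_power_mod unfolding bij_betw_def inj_on_def cong_def by auto

lemma dlog_less_and_cong:
  assumes "x \<in> {0<..<p}"
  shows "dlog p g x < q \<and> [g ^ dlog p g x = x] (mod p)"
proof -
  have "x \<in> (\<lambda>i. g ^ i mod p) ` {..<q}"
    using assms bij_betw_power_mod by (simp add: bij_betw_def)
  then obtain i where i: "i < q" "g ^ i mod p = x"
    by auto
  then have cong: "[g ^ i = x] (mod p)"
    using assms by (simp add: cong_def)
  then have "[g ^ dlog p g x = x] (mod p)"
    unfolding dlog_def by (rule LeastI)
  moreover have "dlog p g x \<le> i"
    unfolding dlog_def using cong by (rule Least_le)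
  ultimately show ?thesis
    using i by simp
qed

lemma bij_betw_power_mult_mod:
  assumes "\<not> p dvd m"
  shows "bij_betw (\<lambda>i. g ^ i * m mod p) {..<q} {0<..<p}"
proof -
  have "coprime m p"
    using prime_imp_coprime [OF prime assms] by (simp add: coprime_commute)
  then have inj: "inj_on (\<lambda>i. g ^ i * m mod p) {..<q}"
    by (intro inj_onI power_cong_imp_eq) (auto simp flip: cong_def dest: cong_mult_rcancel_nat)
  have "\<not> p dvd g ^ i * m" for i
    using assms not_dvd_power prime by (simp add: prime_dvd_mult_iff)
  then have sub: "(\<lambda>i. g ^ i * m mod p) ` {..<q} \<subseteq> {0<..<p}"
    using p_pos by (auto simp: dvd_eq_mod_eq_0)
  have "card ((\<lambda>i. g ^ i * m mod p) ` {..<q}) = card {0<..<p}"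
    using inj by (simp add: card_image q_def)
  with inj sub show ?thesis
    by (simp add: bij_betw_def card_subset_eq)
qed

lemma sum_power_mult_mod:
  assumes "\<not> p dvd m"
  shows "(\<Sum>i<q. f (g ^ i * m mod p)) = (\<Sum>c\<in>{0<..<p}. f c)"
  using sum.reindex_bij_betw [OF bij_betw_power_mult_mod [OF assms]] by simp

lemma sum_add_char_units: "(\<Sum>c\<in>{0<..<p}. add_char p (int c)) = -1"
proof -
  have "(\<Sum>c<p. add_char p (int c * 1)) = 0"
    using p_gt_2 by (intro sum_add_char_eq_0) auto
  moreover have "{..<p} = insert 0 {0<..<p}"
    using p_pos by auto
  ultimately show ?thesis
    by (simp add: add_eq_0_iff)
qed

lemma sum_add_char_power_mult:
  assumes "s < q"
  shows "(\<Sum>w<q. add_char p (int (g ^ w * (g ^ s - 1)))) = (if s = 0 then of_nat q else -1)"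
proof (cases "s = 0")
  case False
  have "g ^ s \<ge> 1"
    using not_dvd_power [of s] by (cases "g ^ s") auto
  then have "\<not> p dvd g ^ s - 1"
    using power_cong_imp_eq [of s 0] assms False q_pos by (auto simp: cong_altdef_nat)
  then have "(\<Sum>w<q. add_char p (int (g ^ w * (g ^ s - 1) mod p))) = -1"
    using sum_power_mult_mod [of "g ^ s - 1" "\<lambda>c. add_char p (int c)"] by (simp add: sum_add_char_units)
  with False show ?thesis
    by (simp add: add_char_mod [OF p_pos])
qed simp

definition gauss_term :: "nat \<Rightarrow> nat \<Rightarrow> complex" where
  "gauss_term k w = add_char q (- (int k * int w)) * add_char p (int (g ^ w))"

definition gauss_sum :: "nat \<Rightarrow> complex" where
  "gauss_sum k = (\<Sum>w<q. gauss_term k w)"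

lemma gauss_term_periodic: "gauss_term k (w + q) = gauss_term k w"
proof -
  have "[g ^ (w + q) = g ^ w] (mod p)"
    using cong_mult [OF cong_refl power_q_cong, of "g ^ w"] by (simp add: power_add)
  then have "[int (g ^ (w + q)) = int (g ^ w)] (mod int p)"
    by (simp only: cong_int_iff)
  moreover have "[- (int k * int (w + q)) = - (int k * int w)] (mod int q)"
    by (simp add: cong_iff_dvd_diff algebra_simps)
  ultimately show ?thesis
    unfolding gauss_term_def by (simp add: add_char_cong [OF p_pos] add_char_cong [OF q_pos])
qed

lemma sum_twisted_gauss_term:
  assumes "[g ^ v = x] (mod p)"
  shows "(\<Sum>u<q. add_char q (- (int k * int u)) * add_char p (int (g ^ u * x)))
    = add_char q (int k * int v) * gauss_sum k"
proof -
  have "add_char q (- (int k * int u)) * add_char p (int (g ^ u * x))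
      = add_char q (int k * int v) * gauss_term k (u + v)" for u
  proof -
    have "[g ^ (u + v) = g ^ u * x] (mod p)"
      using cong_mult [OF cong_refl assms, of "g ^ u"] by (simp add: power_add)
    then have "[int (g ^ u * x) = int (g ^ (u + v))] (mod int p)"
      by (metis cong_int_iff cong_sym)
    then have "add_char p (int (g ^ u * x)) = add_char p (int (g ^ (u + v)))"
      by (rule add_char_cong [OF p_pos])
    moreover have "add_char q (- (int k * int u)) = add_char q (int k * int v) * add_char q (- (int k * int (u + v)))"
      by (simp add: add_char_add [symmetric] algebra_simps)
    ultimately show ?thesis
      by (simp add: gauss_term_def)
  qed
  then show ?thesis
    unfolding gauss_sum_def
    by (simp add: sum_distrib_left [symmetric] sum_lessThan_shift_periodic gauss_term_periodic)
qed

lemma cnj_gauss_term_mult: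
  "cnj (gauss_term k w) * gauss_term k (s + w)
    = add_char q (- (int k * int s)) * add_char p (int (g ^ w * (g ^ s - 1)))"
proof -
  have "g ^ s \<ge> 1"
    using not_dvd_power [of s] by (cases "g ^ s") auto
  then have "int (g ^ (s + w)) - int (g ^ w) = int (g ^ w * (g ^ s - 1))"
    by (simp add: power_add of_nat_diff algebra_simps)
  moreover have "- (int k * int (s + w)) - - (int k * int w) = - (int k * int s)"
    by (simp add: algebra_simps)
  ultimately show ?thesis
    by (simp add: gauss_term_def mult.commute mult.left_commute cnj_add_char_mult)
qed

text \<open>After the substitution \<open>u = s + w\<close> the inner sum over \<open>w\<close> runs over all units of
  \<open>\<int>/p\<int>\<close>, hence equals \<open>-1\<close> unless \<open>s = 0\<close>.\<close>
lemma gauss_sum_mult_cnj: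
  assumes "0 < k" and "k < q"
  shows "gauss_sum k * cnj (gauss_sum k) = of_nat p"
proof -
  have "gauss_sum k * cnj (gauss_sum k) = (\<Sum>w<q. cnj (gauss_term k w) * gauss_sum k)"
    by (simp only: mult.commute [of "gauss_sum k"]) (simp add: gauss_sum_def cnj_sum sum_distrib_right)
  also have "\<dots> = (\<Sum>w<q. cnj (gauss_term k w) * (\<Sum>s<q. gauss_term k (s + w)))"
    unfolding gauss_sum_def
    using sum_lessThan_shift_periodic [of "gauss_term k" q] gauss_term_periodic by simp
  also have "\<dots> = (\<Sum>s<q. add_char q (- (int k * int s)) * (\<Sum>w<q. add_char p (int (g ^ w * (g ^ s - 1)))))"
    unfolding sum_distrib_left cnj_gauss_term_mult by (rule sum.swap)
  also have "\<dots> = (\<Sum>s<q. (if s = 0 then of_nat p else 0) - add_char q (int s * - int k))"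
  proof (rule sum.cong [OF refl])
    fix s assume "s \<in> {..<q}"
    then have "(\<Sum>w<q. add_char p (int (g ^ w * (g ^ s - 1)))) = (if s = 0 then of_nat q else -1)"
      by (intro sum_add_char_power_mult) simp
    moreover have "(of_nat p :: complex) = of_nat q + 1"
      using p_pos by (simp add: q_def of_nat_diff)
    ultimately show "add_char q (- (int k * int s)) * (\<Sum>w<q. add_char p (int (g ^ w * (g ^ s - 1))))
        = (if s = 0 then of_nat p else 0) - add_char q (int s * - int k)"
      by (cases "s = 0") (simp_all add: mult.commute)
  qed
  also have "\<dots> = of_nat p - (\<Sum>s<q. add_char q (int s * - int k))"
    using q_pos by (simp add: sum_subtractf)
  also have "(\<Sum>s<q. add_char q (int s * - int k)) = 0"
    using assms by (intro sum_add_char_eq_0) (auto dest: zdvd_imp_le)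
  finally show ?thesis
    by simp
qed

lemma norm_gauss_sum:
  assumes "0 < k" and "k < q"
  shows "norm (gauss_sum k) = sqrt (real p)"
proof -
  have "complex_of_real ((norm (gauss_sum k))\<^sup>2) = of_nat p"
    using gauss_sum_mult_cnj [OF assms] complex_norm_square [of "gauss_sum k"] by simp
  then have "(norm (gauss_sum k))\<^sup>2 = real p"
    by (metis of_real_eq_iff of_real_of_nat_eq)
  then show ?thesis
    by (metis norm_ge_zero real_sqrt_unique)
qed

end

section \<open>Indices along an arithmetic progression\<close>

locale primroot_progression = prime_primroot +
  fixes a r N :: nat
  assumes r_pos: "r > 0" and N_pos: "N > 0"
    and progression_range: "\<forall>j\<in>{1..N}. a + j * r \<in> {1..p - 1}"
begin

definition ind :: "nat \<Rightarrow> nat" where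
  "ind j = dlog p g (a + j * r)"

lemma progression_mem: "j \<in> {1..N} \<Longrightarrow> a + j * r \<in> {0<..<p}"
  using progression_range p_pos by fastforce

lemma ind_less: "j \<in> {1..N} \<Longrightarrow> ind j < q"
  unfolding ind_def using dlog_less_and_cong [OF progression_mem] by blast

lemma ind_cong: "j \<in> {1..N} \<Longrightarrow> [g ^ ind j = a + j * r] (mod p)"
  unfolding ind_def using dlog_less_and_cong [OF progression_mem] by blast

lemma inj_on_ind: "inj_on ind {1..N}"
proof (rule inj_onI)
  fix i j assume i: "i \<in> {1..N}" and j: "j \<in> {1..N}" and "ind i = ind j"
  then have "[a + i * r = a + j * r] (mod p)"
    using ind_cong [OF i] ind_cong [OF j] by (metis cong_sym cong_trans)
  then have "a + i * r = a + j * r"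
    using progression_mem [OF i] progression_mem [OF j] by (simp add: cong_def)
  then show "i = j"
    using r_pos by simp
qed

lemma N_le_q: "N \<le> q"
proof -
  have "ind ` {1..N} \<subseteq> {..<q}"
    using ind_less by auto
  from card_inj_on_le [OF inj_on_ind this] show ?thesis
    by simp
qed

lemma not_dvd_r: "\<not> p dvd r"
proof
  assume "p dvd r"
  then have "p \<le> r"
    using r_pos by (simp add: dvd_imp_le)
  moreover have "a + 1 * r \<in> {1..p - 1}"
    using progression_range N_pos by (metis atLeastAtMost_iff le_refl less_one not_le)
  ultimately show False
    by auto
qed

definition char_sum :: "nat \<Rightarrow> complex" where
  "char_sum k = (\<Sum>j\<in>{1..N}. add_char q (int k * int (ind j)))"

lemma norm_sum_twisted_progression_le:
  "norm (\<Sum>j\<in>{1..N}. add_char q (- (int k * int u)) * add_char p (int (g ^ u * (a + j * r))))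
     \<le> 2 / norm (add_char p (int (g ^ u * r mod p)) - 1)"
proof -
  define z where "z = add_char p (int (g ^ u * r mod p))"
  have "add_char p (int (g ^ u * (a + j * r))) = add_char p (int (g ^ u * a)) * z ^ j" for j
  proof -
    have "int (g ^ u * (a + j * r)) = int (g ^ u * a) + int j * int (g ^ u * r)"
      by (simp add: algebra_simps)
    then show ?thesis
      by (simp only: z_def add_char_mod [OF p_pos] add_char_add add_char_power)
  qed
  then have "norm (\<Sum>j\<in>{1..N}. add_char q (- (int k * int u)) * add_char p (int (g ^ u * (a + j * r))))
      = norm (\<Sum>j\<in>{1..<Suc N}. z ^ j)"
    by (simp add: sum_distrib_left [symmetric] norm_mult atLeastLessThanSuc_atLeastAtMost)
  also have "\<dots> \<le> 2 / norm (z - 1)"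
  proof (rule norm_sum_power_ivl_le)
    show "norm z = 1"
      by (simp add: z_def)
    have "\<not> p dvd g ^ u * r"
      using not_dvd_power not_dvd_r prime by (simp add: prime_dvd_mult_iff)
    then have "g ^ u * r mod p \<in> {0<..<p}"
      using p_pos by (simp add: dvd_eq_mod_eq_0)
    then show "z \<noteq> 1"
      using p_pos mod_less_divisor [OF p_pos, of "g ^ u * r"]
      by (auto simp: z_def add_char_eq_1_iff dest!: dvd_imp_le)
  qed
  finally show ?thesis
    by (simp add: z_def)
qed

text \<open>Multiplying by a Gauss sum of modulus \<open>\<surd>p\<close> turns the characters of the indices into
  additive characters of the progression itself, whose sums are geometric (P\'olya--Vinogradov).\<close>
lemma norm_char_sum_le:
  assumes "0 < k" and "k < q"
  shows "norm (char_sum k) \<le> 4 * sqrt (real p) * (1 + ln (real p))"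
proof -
  have "gauss_sum k * char_sum k = (\<Sum>j\<in>{1..N}. add_char q (int k * int (ind j)) * gauss_sum k)"
    by (simp add: char_sum_def sum_distrib_left mult.commute)
  also have "\<dots> = (\<Sum>j\<in>{1..N}. \<Sum>u<q. add_char q (- (int k * int u)) * add_char p (int (g ^ u * (a + j * r))))"
    using sum_twisted_gauss_term [OF ind_cong] by (intro sum.cong) auto
  also have "\<dots> = (\<Sum>u<q. \<Sum>j\<in>{1..N}. add_char q (- (int k * int u)) * add_char p (int (g ^ u * (a + j * r))))"
    by (rule sum.swap)
  finally have "norm (gauss_sum k * char_sum k) \<le> (\<Sum>u<q. 2 / norm (add_char p (int (g ^ u * r mod p)) - 1))"
    by (simp only:) (rule order.trans [OF norm_sum sum_mono], rule norm_sum_twisted_progression_le)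
  also have "\<dots> = (\<Sum>c\<in>{0<..<p}. 2 / norm (add_char p (int c) - 1))"
    by (rule sum_power_mult_mod [OF not_dvd_r])
  also have "{0<..<p} = {1..<p}"
    by auto
  also have "(\<Sum>c\<in>{1..<p}. 2 / norm (add_char p (int c) - 1))
      = 2 * (\<Sum>c\<in>{1..<p}. 1 / norm (add_char p (int c) - 1))"
    by (simp add: sum_distrib_left)
  also have "\<dots> \<le> 2 * (2 * real p * (1 + ln (real p)))"
    using p_gt_2 by (intro mult_left_mono sum_inverse_norm_add_char_minus_1_le) auto
  also have "\<dots> = sqrt (real p) * (4 * sqrt (real p) * (1 + ln (real p)))"
    by (simp add: mult.commute mult.left_commute)
  finally show ?thesis
    using p_pos by (simp add: norm_mult norm_gauss_sum [OF assms])
qed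

section \<open>Discrepancy\<close>

lemma Mset_eq: "Mset p g a r N = (\<lambda>j. real (ind j) / real q) ` {1..N}"
  by (simp add: Mset_def ind_def q_def)

lemma inj_on_ind_div_q: "inj_on (\<lambda>j. real (ind j) / real q) {1..N}"
proof (rule inj_onI)
  fix i j assume "i \<in> {1..N}" "j \<in> {1..N}" and "real (ind i) / real q = real (ind j) / real q"
  then show "i = j"
    using q_pos inj_on_ind by (auto dest: inj_onD)
qed

lemma card_Mset: "card (Mset p g a r N) = N"
  unfolding Mset_eq using card_image [OF inj_on_ind_div_q] by simp

lemma card_Mset_inter:
  assumes "0 \<le> \<alpha>" and "0 \<le> \<beta>"
  shows "card (Mset p g a r N \<inter> {\<alpha>..\<beta>}) = card {j\<in>{1..N}. ind j \<in> grid_ivl q \<alpha> \<beta>}"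
proof -
  have "j \<in> {1..N} \<Longrightarrow> real (ind j) / real q \<in> {\<alpha>..\<beta>} \<longleftrightarrow> ind j \<in> grid_ivl q \<alpha> \<beta>" for j
    using mem_grid_ivl_iff [OF ind_less assms] by simp
  then have "Mset p g a r N \<inter> {\<alpha>..\<beta>} = (\<lambda>j. real (ind j) / real q) ` {j\<in>{1..N}. ind j \<in> grid_ivl q \<alpha> \<beta>}"
    unfolding Mset_eq by blast
  moreover have "inj_on (\<lambda>j. real (ind j) / real q) {j\<in>{1..N}. ind j \<in> grid_ivl q \<alpha> \<beta>}"
    by (rule inj_on_subset [OF inj_on_ind_div_q]) auto
  ultimately show ?thesis
    by (simp add: card_image)
qed

text \<open>Erd\H{o}s--Tur\'an in its simplest form: expand the indicator of the interval in additive
  characters modulo \<open>q\<close>; the trivial character gives the main term and every other one is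
  controlled by a character sum bound and a geometric sum.\<close>
lemma card_ind_in_ivl_approx:
  assumes "{lo..<hi} \<subseteq> {..<q}"
  shows "\<bar>real (card {j\<in>{1..N}. ind j \<in> {lo..<hi}}) - real (hi - lo) * real N / real q\<bar>
    \<le> 64 * sqrt (real p) * (ln (real p))\<^sup>2"
proof -
  define A where "A = {j\<in>{1..N}. ind j \<in> {lo..<hi}}"
  define G where "G k = (\<Sum>m\<in>{lo..<hi}. add_char q (- (int k * int m)))" for k
  define B where "B = 4 * sqrt (real p) * (1 + ln (real p))"
  have "of_nat (q * card A) = (\<Sum>k<q. G k * char_sum k)"
    unfolding A_def G_def char_sum_def
    using assms ind_less by (intro card_filter_add_char_expansion) auto
  also have "\<dots> = of_nat ((hi - lo) * N) + (\<Sum>k\<in>{1..<q}. G k * char_sum k)"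
    using q_pos by (simp add: G_def char_sum_def lessThan_atLeast0 sum.atLeast_Suc_lessThan)
  finally have "complex_of_real (real (q * card A) - real ((hi - lo) * N)) = (\<Sum>k\<in>{1..<q}. G k * char_sum k)"
    by simp
  then have "\<bar>real (q * card A) - real ((hi - lo) * N)\<bar> = norm (\<Sum>k\<in>{1..<q}. G k * char_sum k)"
    by (metis norm_of_real)
  also have "\<dots> \<le> (\<Sum>k\<in>{1..<q}. 2 / norm (add_char q (int k) - 1) * B)"
  proof (rule order.trans [OF norm_sum sum_mono])
    fix k assume "k \<in> {1..<q}"
    then have k: "0 < k" "k < q"
      by auto
    show "norm (G k * char_sum k) \<le> 2 / norm (add_char q (int k) - 1) * B"
      unfolding norm_mult G_def B_def
      by (intro mult_mono norm_sum_add_char_ivl_le norm_char_sum_le k) auto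
  qed
  also have "\<dots> = 2 * (\<Sum>k\<in>{1..<q}. 1 / norm (add_char q (int k) - 1)) * B"
    by (simp add: sum_distrib_left sum_distrib_right)
  also have "\<dots> \<le> 2 * (2 * real q * (1 + ln (real q))) * B"
    using q_ge_2 ln_p_ge_1 by (intro mult_right_mono mult_left_mono sum_inverse_norm_add_char_minus_1_le)
      (auto simp: B_def)
  finally have "\<bar>real (q * card A) - real ((hi - lo) * N)\<bar> / real q \<le> 4 * (1 + ln (real q)) * B"
    using q_pos by (simp add: divide_le_eq mult.commute mult.left_commute)
  moreover have "real (q * card A) - real ((hi - lo) * N) = real q * (real (card A) - real (hi - lo) * real N / real q)"
    using q_pos by (simp add: field_simps)
  ultimately have "\<bar>real (card A) - real (hi - lo) * real N / real q\<bar> \<le> 4 * (1 + ln (real q)) * B"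
    using q_pos by (simp add: abs_mult)
  also have "\<dots> \<le> (8 * ln (real p)) * (8 * sqrt (real p) * ln (real p))"
  proof (rule mult_mono)
    have "ln (real q) \<le> ln (real p)"
      using q_pos by (simp add: q_def)
    then show "4 * (1 + ln (real q)) \<le> 8 * ln (real p)"
      using ln_p_ge_1 by (smt (verit))
    show "B \<le> 8 * sqrt (real p) * ln (real p)"
      using mult_left_mono [of "1 + ln (real p)" "2 * ln (real p)" "4 * sqrt (real p)"] ln_p_ge_1
      by (simp add: B_def)
  qed (use ln_p_ge_1 in \<open>auto simp: B_def\<close>)
  also have "\<dots> = 64 * sqrt (real p) * (ln (real p))\<^sup>2"
    by (simp add: power2_eq_square)
  finally show ?thesis
    unfolding A_def .
qed

lemma abs_disc_le:
  assumes "0 \<le> \<alpha>" and "\<alpha> \<le> \<beta>" and "\<beta> \<le> 1"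
  shows "\<bar>disc (Mset p g a r N) \<alpha> \<beta>\<bar> \<le> 65 * sqrt (real p) * (ln (real p))\<^sup>2"
proof -
  define J where "J = grid_ivl q \<alpha> \<beta>"
  define A where "A = {j\<in>{1..N}. ind j \<in> J}"
  obtain lo hi where J: "J = {lo..<hi}"
    unfolding J_def grid_ivl_def by blast
  have "{lo..<hi} \<subseteq> {..<q}"
    using grid_ivl_subset [of q \<alpha> \<beta>] unfolding J_def [symmetric] J .
  then have "\<bar>real (card A) - real (card J) * real N / real q\<bar> \<le> 64 * sqrt (real p) * (ln (real p))\<^sup>2"
    unfolding A_def J by (simp only: card_atLeastLessThan card_ind_in_ivl_approx)
  moreover have "\<bar>real (card J) * real N / real q - (\<beta> - \<alpha>) * real N\<bar> \<le> 1"
  proof -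
    have eq: "real (card J) * real N / real q - (\<beta> - \<alpha>) * real N
        = real N / real q * (real (card J) - (\<beta> - \<alpha>) * real q)"
      using q_pos by (simp add: field_simps)
    have "real N / real q \<le> 1"
      using N_le_q q_pos by simp
    then have "real N / real q * \<bar>real (card J) - (\<beta> - \<alpha>) * real q\<bar> \<le> 1"
      unfolding J_def by (rule mult_le_one [OF _ abs_ge_zero card_grid_ivl_approx [OF assms]])
    then show ?thesis
      unfolding eq abs_mult by simp
  qed
  moreover have "1 \<le> sqrt (real p) * (ln (real p))\<^sup>2"
    using mult_mono [of 1 "sqrt (real p)" 1 "(ln (real p))\<^sup>2"] ln_p_ge_1 p_pos by (simp add: one_le_power)
  moreover have "disc (Mset p g a r N) \<alpha> \<beta> = real (card A) - (\<beta> - \<alpha>) * real N"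
    using assms by (simp add: disc_def card_Mset_inter card_Mset A_def J_def)
  ultimately show ?thesis
    by (simp only: mult.assoc)
qed

lemma abs_disc_le_trivial:
  assumes "0 \<le> \<alpha>" and "\<alpha> \<le> \<beta>" and "\<beta> \<le> 1"
  shows "\<bar>disc (Mset p g a r N) \<alpha> \<beta>\<bar> \<le> (\<beta> - \<alpha>) * real q + 1"
proof -
  define J where "J = grid_ivl q \<alpha> \<beta>"
  define A where "A = {j\<in>{1..N}. ind j \<in> J}"
  have "card A \<le> card J"
    by (rule card_inj_on_le [OF inj_on_subset [OF inj_on_ind]]) (auto simp: A_def J_def grid_ivl_def)
  moreover have "real (card J) \<le> (\<beta> - \<alpha>) * real q + 1"
    using card_grid_ivl_approx [OF assms, of q] by (simp add: J_def)
  moreover have "(\<beta> - \<alpha>) * real N \<le> (\<beta> - \<alpha>) * real q" and "0 \<le> (\<beta> - \<alpha>) * real N"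
    using N_le_q assms by (auto intro: mult_left_mono)
  moreover have "disc (Mset p g a r N) \<alpha> \<beta> = real (card A) - (\<beta> - \<alpha>) * real N"
    using assms by (simp add: disc_def card_Mset_inter card_Mset A_def J_def)
  ultimately show ?thesis
    by linarith
qed

text \<open>For intervals longer than \<open>\<surd>p / p\<close> the factor \<open>ln p\<close> of the general bound is absorbed
  into \<open>2 + ln (p (\<beta> - \<alpha>))\<close>; shorter ones are handled by the trivial bound.\<close>
lemma abs_disc_le_log:
  assumes "0 \<le> \<alpha>" and "\<alpha> \<le> \<beta>" and "\<beta> \<le> 1" and "1 / pi < real p * (\<beta> - \<alpha>)"
  shows "\<bar>disc (Mset p g a r N) \<alpha> \<beta>\<bar>
    \<le> 130 * sqrt (real p) * ln (real p) * (2 + ln (real p * (\<beta> - \<alpha>)))"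
proof -
  define L where "L = real p * (\<beta> - \<alpha>)"
  have "0 < 1 / pi"
    by simp
  then have L_pos: "0 < L"
    using assms(4) unfolding L_def by linarith
  have "ln (1 / pi) < ln L"
    using assms(4) L_pos by (simp add: L_def)
  then have ln_L: "- (16 / 10) \<le> ln L"
    using ln_pi_le by (simp add: ln_div)
  have sqrt_p: "1 \<le> sqrt (real p)"
    using p_pos by simp
  have "\<bar>disc (Mset p g a r N) \<alpha> \<beta>\<bar> \<le> 130 * sqrt (real p) * ln (real p) * (2 + ln L)"
  proof (cases "sqrt (real p) \<le> L")
    case True
    then have "ln (sqrt (real p)) \<le> ln L"
      using p_pos L_pos by (subst ln_le_cancel_iff) auto
    then have "ln (real p) \<le> 2 * (2 + ln L)"
      using p_pos by (simp add: ln_sqrt)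
    have "\<bar>disc (Mset p g a r N) \<alpha> \<beta>\<bar> \<le> 65 * sqrt (real p) * ln (real p) * ln (real p)"
      using abs_disc_le [OF assms(1-3)] by (simp add: power2_eq_square mult.assoc)
    also have "\<dots> \<le> 65 * sqrt (real p) * ln (real p) * (2 * (2 + ln L))"
      using \<open>ln (real p) \<le> 2 * (2 + ln L)\<close> ln_p_ge_1 by (intro mult_left_mono) auto
    also have "\<dots> = 130 * sqrt (real p) * ln (real p) * (2 + ln L)"
      by (simp add: algebra_simps)
    finally show ?thesis .
  next
    case False
    have "(\<beta> - \<alpha>) * real q \<le> (\<beta> - \<alpha>) * real p"
      using assms(2) by (intro mult_left_mono) (auto simp: q_def)
    then have "(\<beta> - \<alpha>) * real q \<le> L"
      by (simp add: L_def mult.commute)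
    then have "\<bar>disc (Mset p g a r N) \<alpha> \<beta>\<bar> \<le> 2 * sqrt (real p)"
      using abs_disc_le_trivial [OF assms(1-3)] False sqrt_p by linarith
    moreover have "sqrt (real p) * 1 * (4 / 10) \<le> sqrt (real p) * ln (real p) * (2 + ln L)"
      using ln_p_ge_1 ln_L sqrt_p by (intro mult_mono) auto
    ultimately show ?thesis
      by linarith
  qed
  then show ?thesis
    by (simp only: L_def)
qed

lemma abs_ext_disc_le:
  "\<bar>ext_disc (Mset p g a r N)\<bar> \<le> 65 / real (card (Mset p g a r N)) * sqrt (real p) * (ln (real p))\<^sup>2"
proof -
  define D where "D = {(\<alpha>, \<beta>). 0 \<le> \<alpha> \<and> \<alpha> \<le> \<beta> \<and> (\<beta>::real) \<le> 1}"
  define K where "K = 65 * sqrt (real p) * (ln (real p))\<^sup>2"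
  have bound: "\<bar>disc (Mset p g a r N) (fst ab) (snd ab)\<bar> \<le> K" if "ab \<in> D" for ab
    using that abs_disc_le by (auto simp: D_def K_def)
  have zero: "(0, 0) \<in> D"
    by (simp add: D_def)
  then have "(SUP ab\<in>D. \<bar>disc (Mset p g a r N) (fst ab) (snd ab)\<bar>) \<le> K"
    using bound by (intro cSUP_least) auto
  moreover have "bdd_above ((\<lambda>ab. \<bar>disc (Mset p g a r N) (fst ab) (snd ab)\<bar>) ` D)"
    using bound by (intro bdd_aboveI2)
  then have "\<bar>disc (Mset p g a r N) 0 0\<bar> \<le> (SUP ab\<in>D. \<bar>disc (Mset p g a r N) (fst ab) (snd ab)\<bar>)"
    using cSUP_upper [OF zero] by fastforce
  ultimately show ?thesis
    using N_pos by (simp add: ext_disc_def card_Mset D_def K_def abs_mult divide_right_mono)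
qed

end

theorem theorem1:
  "\<exists>c1 c2 :: real. c1 > 0 \<and> c2 > 0 \<and>
     (\<forall>(p::nat) (g::nat) (a::nat) (r::nat) (N::nat).
        prime p \<and> p > 2 \<and> residue_primroot p g \<and> r > 0 \<and> N > 0 \<and>
        (\<forall>j\<in>{1..N}. a + j * r \<in> {1..p - 1}) \<longrightarrow>
          (\<forall>\<alpha> \<beta> :: real. 0 \<le> \<alpha> \<and> \<alpha> \<le> \<beta> \<and> \<beta> \<le> 1 \<and> 1 / pi < real p * (\<beta> - \<alpha>) \<longrightarrow>
             \<bar>disc (Mset p g a r N) \<alpha> \<beta>\<bar>
               \<le> c1 * sqrt (real p) * ln (real p) * (2 + ln (real p * (\<beta> - \<alpha>)))) \<and>
          \<bar>ext_disc (Mset p g a r N)\<bar>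
            \<le> c2 / real (card (Mset p g a r N)) * sqrt (real p) * (ln (real p))^2)"
proof (rule exI [of _ 130], rule exI [of _ 65], intro conjI allI impI)
  fix p g a r N :: nat
  assume "prime p \<and> p > 2 \<and> residue_primroot p g \<and> r > 0 \<and> N > 0 \<and>
    (\<forall>j\<in>{1..N}. a + j * r \<in> {1..p - 1})"
  then interpret primroot_progression p g a r N
    by unfold_locales auto
  show "\<bar>disc (Mset p g a r N) \<alpha> \<beta>\<bar> \<le> 130 * sqrt (real p) * ln (real p) * (2 + ln (real p * (\<beta> - \<alpha>)))"
    if "0 \<le> \<alpha> \<and> \<alpha> \<le> \<beta> \<and> \<beta> \<le> 1 \<and> 1 / pi < real p * (\<beta> - \<alpha>)" for \<alpha> \<beta> :: real
    using that abs_disc_le_log by blast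
  show "\<bar>ext_disc (Mset p g a r N)\<bar> \<le> 65 / real (card (Mset p g a r N)) * sqrt (real p) * (ln (real p))\<^sup>2"
    by (rule abs_ext_disc_le)
qed simp_all

end
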